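(* Let $q\ge2$, $b\ge2$, $t\ge1$ and $n\ge(t+1)b-1$. Let $\boldsymbol{x}=0^b\circ\boldsymbol{X}^1_{n-b,q,b}$ and $\boldsymbol{y}=0^{b-1}1\circ\boldsymbol{X}^1_{n-b,q,b}$ (so $\boldsymbol{x}=\boldsymbol{X}^0_{n,q,b}$ and $\boldsymbol{y}$ differs from $\boldsymbol{x}$ only in its $b$-th entry). Then \[ |\mathcal{D}_{t,b}(\boldsymbol{x})\cap\mathcal{D}_{t,b}(\boldsymbol{y})|=D_{q,b}(n,t)-D_{q,b}(n-b,t)+D_{q,b}(n-(q+1)b,t-q). \] In particular, $N^-_{q,b}(n,t)\ge D_{q,b}(n,t)-D_{q,b}(n-b,t)+D_{q,b}(n-(q+1)b,t-q)$.
   Context: $\Sigma_q=\{0,\ldots,q-1\}$; $\alpha^k$ denotes $k$ copies of $\alpha$, $\circ$ is concatenation. A $b$-burst-deletion at position $i\in[1,n-b+1]$ transforms $x_1\cdots x_n$ into $x_1\cdots x_{i-1}x_{i+b}\cdots x_n$. For $n\ge tb+1$, $t\ge0$, $\mathcal{D}_{t,b}(\boldsymbol{x})$ is the set of all length-$(n-tb)$ sequences obtainable from $\boldsymbol{x}$ by $t$ successive $b$-burst-deletions. The $b$-cyclic sequence $\boldsymbol{X}^{\sigma}_{m,q,b}=X_1\cdots X_m$ has $X_i\equiv\sigma+\lfloor (i-1)/b\rfloor\pmod q$. For $m\ge bs+1$, $s\ge0$: $D_{q,b}(m,s)=\max\{|\mathcal{D}_{s,b}(\boldsymbol{z})|:\boldsymbol{z}\in\Sigma_q^m\}$;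 conventions $D_{q,b}(m,s)=1$ if $m=bs\ge0$, $D_{q,b}(m,s)=0$ if $m<bs$ or $s<0$. $N^-_{q,b}(n,t)=\max\{|\mathcal{D}_{t,b}(\boldsymbol{u})\cap\mathcal{D}_{t,b}(\boldsymbol{v})|:\boldsymbol{u}\ne\boldsymbol{v}\in\Sigma_q^n\}$. *)

theory Defs
  imports Main
begin

definition seqs :: "nat \<Rightarrow> nat \<Rightarrow> nat list set" where
  "seqs q n = {z. length z = n \<and> set z \<subseteq> {..<q}}"

text \<open>A b-burst-deletion at (1-based) position i+1, i.e. 0-based start i, with i + b \<le> length x.\<close>
definition burst_del :: "nat \<Rightarrow> nat \<Rightarrow> 'a list \<Rightarrow> 'a list" where
  "burst_del b i x = take i x @ drop (i + b) x"

definition burst_dels :: "nat \<Rightarrow> 'a list \<Rightarrow> 'a list set" where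
  "burst_dels b x = {burst_del b i x | i. i + b \<le> length x}"

fun Dset :: "nat \<Rightarrow> nat \<Rightarrow> 'a list \<Rightarrow> 'a list set" where
  "Dset 0 b x = {x}"
| "Dset (Suc t) b x = (\<Union>y \<in> Dset t b x. burst_dels b y)"

definition cyc :: "nat \<Rightarrow> nat \<Rightarrow> nat \<Rightarrow> nat \<Rightarrow> nat list" where
  "cyc \<sigma> m q b = map (\<lambda>i. (\<sigma> + i div b) mod q) [0..<m]"

definition Dmax :: "nat \<Rightarrow> nat \<Rightarrow> int \<Rightarrow> int \<Rightarrow> nat" where
  "Dmax q b m s =
     (if s < 0 \<or> m < int b * s then 0
      else if m = int b * s then 1
      else Max {card (Dset (nat s) b z) | z. z \<in> seqs q (nat m)})"

definition Nminus :: "nat \<Rightarrow> nat \<Rightarrow> nat \<Rightarrow> nat \<Rightarrow> nat" where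
  "Nminus q b n t =
     Max {card (Dset t b u \<inter> Dset t b v) | u v. u \<in> seqs q n \<and> v \<in> seqs q n \<and> u \<noteq> v}"

end

theory Submission
  imports Defs "HOL-Number_Theory.Cong"
begin

text \<open>
  A word obtained from z by s bursts of length b starts with z!(j*b) for some j \<le> s. Grouping the
  results by the least such j (the lead index of their first symbol) expresses |D_s(z)| as a sum over
  the lead symbols of z; since a q-ary word has at most q lead symbols, with distinct lead indices,
  this sum is bounded by the recursion Drec below, and cyclic sequences attain it. Hence
  D_{q,b}(m,s) = Drec m s.

  The words x and y differ only at position b-1, which is not a lead position. For such a pair only
  the lead symbol z!0 contributes differently, which gives
  |D(z1) \<inter> D(z2)| = |D(z1)| - |D(tl z1)| + |D(tl z1) \<inter> D(tl z2)|.
  After b-1 such steps the difference sits at the first position, where the intersection consists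
  of the words obtained after deleting the first burst. Telescoping the recursion of Drec turns
  the resulting expression into the one stated.
\<close>

lemma mod_add_left_inj:
  fixes x j j' q :: nat
  assumes "(x + j) mod q = (x + j') mod q" and "j < q" and "j' < q"
  shows "j = j'"
  using assms cong_add_lcancel_nat[of x j j' q] cong_less_modulus_unique_nat[of j j' q]
  by (simp add: cong_def)

lemma sum_le_sum_lessThan_antimono:
  fixes G :: "nat \<Rightarrow> nat"
  assumes antimono: "\<And>j. G (Suc j) \<le> G j" and "finite S" and "card S \<le> q"
  shows "sum G S \<le> (\<Sum>j<q. G j)"
  using assms(2,3)
proof (induction q arbitrary: S)
  case 0
  then show ?case by simp
next
  case (Suc k)
  show ?case
  proof (cases "card S \<le> k")
    case True
    with Suc have "sum G S \<le> (\<Sum>j<k. G j)" by blast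
    then show ?thesis by simp
  next
    case False
    then have "S \<noteq> {}" and card_S: "card S = Suc k"
      using Suc.prems by auto
    define M where "M = Max S"
    have "M \<in> S"
      using Suc.prems(1) \<open>S \<noteq> {}\<close> by (simp add: M_def)
    have "S \<subseteq> {..M}"
      using Suc.prems(1) by (auto simp: M_def)
    then have "k \<le> M"
      using card_mono[of "{..M}" S] card_S by simp
    then have "G M \<le> G k"
      by (rule lift_Suc_antimono_le[of G, OF antimono])
    moreover have "sum G (S - {M}) \<le> (\<Sum>j<k. G j)"
      using Suc.IH[of "S - {M}"] Suc.prems(1) \<open>M \<in> S\<close> card_S by simp
    moreover have "sum G S = G M + sum G (S - {M})"
      using Suc.prems(1) \<open>M \<in> S\<close> by (rule sum.remove)
    ultimately show ?thesis
      by simp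
  qed
qed

lemma tl_list_update: "0 < k \<Longrightarrow> tl (xs[k := v]) = (tl xs)[k - 1 := v]"
  by (cases xs; cases k) auto

lemma replicate_append_update_last:
  "0 < k \<Longrightarrow> (replicate k a @ w)[k - 1 := c] = replicate (k - 1) a @ [c] @ w"
  by (cases k) (simp_all add: list_update_append flip: replicate_append_same)

lemma card_UN_image_Cons:
  assumes "finite C" and "\<And>c. c \<in> C \<Longrightarrow> finite (A c)"
  shows "card (\<Union>c \<in> C. (#) c ` A c) = (\<Sum>c \<in> C. card (A c))"
  using assms by (subst card_UN_disjoint) (auto simp: card_image)

section \<open>Burst deletions read from the left\<close>

text \<open>
  Normal form of s successive b-burst deletions: reading z from the left, either the next b
  symbols form a deleted burst or the next symbol is kept.
\<close>

inductive deletes :: "nat \<Rightarrow> nat \<Rightarrow> 'a list \<Rightarrow> 'a list \<Rightarrow> bool" for b where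
  deletes_refl: "deletes b 0 z z"
| deletes_burst: "length u = b \<Longrightarrow> deletes b s z y \<Longrightarrow> deletes b (Suc s) (u @ z) y"
| deletes_Cons: "deletes b s z y \<Longrightarrow> deletes b s (a # z) (a # y)"

lemma deletes_length: "deletes b s z y \<Longrightarrow> length z = length y + s * b"
  by (induction rule: deletes.induct) auto

lemma deletes_set: "deletes b s z y \<Longrightarrow> set y \<subseteq> set z"
  by (induction rule: deletes.induct) auto

lemma deletes_append_left: "deletes b s z y \<Longrightarrow> deletes b s (p @ z) (p @ y)"
  by (induction p) (auto intro: deletes_Cons)

lemma deletes_append:
  "deletes b s1 z1 y1 \<Longrightarrow> deletes b s2 z2 y2 \<Longrightarrow> deletes b (s1 + s2) (z1 @ z2) (y1 @ y2)"
proof (induction rule: deletes.induct)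
  case (deletes_refl z)
  then show ?case using deletes_append_left by fastforce
next
  case (deletes_burst u s z y)
  then show ?case using deletes.deletes_burst by fastforce
next
  case (deletes_Cons s z y a)
  then show ?case using deletes.deletes_Cons by fastforce
qed

lemma deletes_Nil: "length z = s * b \<Longrightarrow> deletes b s z []"
proof (induction s arbitrary: z)
  case 0
  then show ?case using deletes_refl by fastforce
next
  case (Suc s)
  have "deletes b (Suc s) (take b z @ drop b z) []"
    by (rule deletes_burst) (use Suc in auto)
  then show ?case by simp
qed

lemma deletes_append_rightE:
  assumes "deletes b s z (v @ r)"
  obtains z1 z2 s1 s2 where "z = z1 @ z2" "s = s1 + s2" "deletes b s1 z1 v" "deletes b s2 z2 r"
proof -
  have "\<exists>z1 z2 s1 s2. z = z1 @ z2 \<and> s = s1 + s2 \<and> deletes b s1 z1 v \<and> deletes b s2 z2 r"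
    using assms
  proof (induction z "v @ r" arbitrary: v rule: deletes.induct)
    case (deletes_refl z)
    then show ?case by (metis add_0 deletes.deletes_refl)
  next
    case (deletes_burst u s z)
    then obtain z1 z2 s1 s2 where "z = z1 @ z2" "s = s1 + s2" "deletes b s1 z1 v" "deletes b s2 z2 r"
      by blast
    with deletes.deletes_burst[OF deletes_burst(1)] show ?case
      by (metis add_Suc append.assoc)
  next
    case (deletes_Cons s z y a)
    show ?case
    proof (cases v)
      case Nil
      with deletes_Cons.hyps show ?thesis by (metis add_0 append_Nil deletes.intros(1,3))
    next
      case (Cons a' v')
      with deletes_Cons obtain z1 z2 s1 s2
        where "z = z1 @ z2" "s = s1 + s2" "deletes b s1 z1 v'" "deletes b s2 z2 r"
        by fastforce
      with Cons deletes_Cons.hyps(3) show ?thesis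
        by (metis Cons_eq_appendI deletes.deletes_Cons list.inject)
    qed
  qed
  with that show thesis by blast
qed

lemma deletes_burst_inside:
  assumes "deletes b s z (p @ u @ r)" and "length u = b"
  shows "deletes b (Suc s) z (p @ r)"
proof -
  obtain z1 z' s1 s' where z: "z = z1 @ z'" "s = s1 + s'" "deletes b s1 z1 p" "deletes b s' z' (u @ r)"
    using assms(1) by (rule deletes_append_rightE)
  obtain z2 z3 s2 s3 where z': "z' = z2 @ z3" "s' = s2 + s3" "deletes b s2 z2 u" "deletes b s3 z3 r"
    using z(4) by (rule deletes_append_rightE)
  have "deletes b (Suc s2) z2 []"
    using deletes_length[OF z'(3)] assms(2) by (intro deletes_Nil) simp
  from deletes_append[OF z(3) deletes_append[OF this z'(4)]] show ?thesis
    using z z' by simp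
qed

lemma deletes_burst_front: "b \<le> length z \<Longrightarrow> deletes b s (drop b z) y \<Longrightarrow> deletes b (Suc s) z y"
  using deletes_burst[of "take b z" b s "drop b z" y] by simp

lemma deletes_ConsD:
  assumes "deletes b s (a # z) y"
  shows "(\<exists>w. y = a # w \<and> deletes b s z w) \<or> (0 < s \<and> deletes b (s - 1) (drop b (a # z)) y)"
  using assms
proof (cases rule: deletes.cases)
  case (deletes_burst u s' z')
  then have "drop b (a # z) = z'"
    by (metis append_eq_conv_conj)
  with deletes_burst show ?thesis by simp
qed (auto intro: deletes_refl)

lemma Dset_Suc_left: "Dset (Suc s) b x = (\<Union>x' \<in> burst_dels b x. Dset s b x')"
  by (induction s arbitrary: x) auto

lemma Dset_Cons: "y \<in> Dset s b z \<Longrightarrow> a # y \<in> Dset s b (a # z)"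
proof (induction s arbitrary: y)
  case 0
  then show ?case by simp
next
  case (Suc s)
  then obtain y' i where "y' \<in> Dset s b z" "i + b \<le> length y'" "y = burst_del b i y'"
    by (auto simp: burst_dels_def)
  moreover have "a # burst_del b i y' = burst_del b (Suc i) (a # y')"
    by (simp add: burst_del_def)
  ultimately show ?case
    using Suc.IH by (force simp: burst_dels_def)
qed

lemma Dset_eq_deletes: "Dset s b z = {y. deletes b s z y}"
proof (intro set_eqI iffI; simp)
  show "deletes b s z y" if "y \<in> Dset s b z" for y
    using that
  proof (induction s arbitrary: y)
    case 0
    then show ?case by (simp add: deletes_refl)
  next
    case (Suc s)
    then obtain y' i where y': "deletes b s z y'" "i + b \<le> length y'" "y = burst_del b i y'"
      by (auto simp: burst_dels_def)
    have "y' = take i y' @ take b (drop i y') @ drop (i + b) y'"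
      by (metis append_take_drop_id drop_drop add.commute)
    with y' deletes_burst_inside[of b s z "take i y'" "take b (drop i y')" "drop (i + b) y'"]
    show ?case by (simp add: burst_del_def)
  qed
  show "y \<in> Dset s b z" if "deletes b s z y" for y
    using that
  proof (induction rule: deletes.induct)
    case (deletes_refl z)
    then show ?case by simp
  next
    case (deletes_burst u s z y)
    have "z \<in> burst_dels b (u @ z)"
      using deletes_burst(1) by (force simp: burst_dels_def burst_del_def)
    with deletes_burst.IH show ?case
      unfolding Dset_Suc_left by blast
  next
    case (deletes_Cons s z y a)
    from deletes_Cons.IH show ?case by (rule Dset_Cons)
  qed
qed

lemma finite_deletes: "finite {y. deletes b s z y}"
proof (rule finite_subset)
  show "{y. deletes b s z y} \<subseteq> {y. set y \<subseteq> set z \<and> length y \<le> length z}"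
    using deletes_set deletes_length by fastforce
  show "finite {y. set y \<subseteq> set z \<and> length y \<le> length z}"
    by (rule finite_lists_length_le) simp
qed

lemma deletes_too_short: "length z < s * b \<Longrightarrow> {y. deletes b s z y} = {}"
  using deletes_length by fastforce

lemma deletes_exact_length: "length z = s * b \<Longrightarrow> {y. deletes b s z y} = {[]}"
  using deletes_length deletes_Nil by fastforce

section \<open>Lead symbols\<close>

definition lead_at :: "nat \<Rightarrow> nat \<Rightarrow> 'a list \<Rightarrow> 'a \<Rightarrow> nat \<Rightarrow> bool" where
  "lead_at b s z c j \<longleftrightarrow> j \<le> s \<and> j * b < length z \<and> z ! (j * b) = c"

definition lead_symbols :: "nat \<Rightarrow> nat \<Rightarrow> 'a list \<Rightarrow> 'a set" where
  "lead_symbols b s z = {c. \<exists>j. lead_at b s z c j}"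

definition lead_index :: "nat \<Rightarrow> nat \<Rightarrow> 'a list \<Rightarrow> 'a \<Rightarrow> nat" where
  "lead_index b s z c = (LEAST j. lead_at b s z c j)"

definition lead_tails :: "nat \<Rightarrow> nat \<Rightarrow> 'a list \<Rightarrow> 'a \<Rightarrow> 'a list set" where
  "lead_tails b s z c =
     {w. deletes b (s - lead_index b s z c) (drop (lead_index b s z c * b + 1) z) w}"

lemma lead_at_lead_index: "c \<in> lead_symbols b s z \<Longrightarrow> lead_at b s z c (lead_index b s z c)"
  unfolding lead_symbols_def lead_index_def by (blast intro: LeastI)

lemma lead_index_le: "lead_at b s z c j \<Longrightarrow> lead_index b s z c \<le> j"
  unfolding lead_index_def by (rule Least_le)

lemma lead_symbols_subset: "lead_symbols b s z \<subseteq> set z"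
  by (auto simp: lead_symbols_def lead_at_def)

lemma finite_lead_symbols: "finite (lead_symbols b s z)"
  by (rule finite_subset[OF lead_symbols_subset]) simp

lemma inj_on_lead_index: "inj_on (lead_index b s z) (lead_symbols b s z)"
proof (rule inj_onI)
  fix c c'
  assume "c \<in> lead_symbols b s z" "c' \<in> lead_symbols b s z"
    and "lead_index b s z c = lead_index b s z c'"
  then show "c = c'"
    using lead_at_lead_index[of c b s z] lead_at_lead_index[of c' b s z]
    by (simp add: lead_at_def)
qed

lemma deletes_ConsE:
  assumes "deletes b s z (c # w)"
  obtains j p z' where "j \<le> s" "z = p @ c # z'" "length p = j * b" "deletes b (s - j) z' w"
proof -
  have "\<exists>j p z'. j \<le> s \<and> z = p @ c # z' \<and> length p = j * b \<and> deletes b (s - j) z' w"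
    using assms
  proof (induction z "c # w" rule: deletes.induct)
    case deletes_refl
    then show ?case by (auto intro!: exI[of _ "[]"] deletes.deletes_refl)
  next
    case (deletes_burst u s z)
    then obtain j p z' where "j \<le> s" "z = p @ c # z'" "length p = j * b" "deletes b (s - j) z' w"
      by blast
    with deletes_burst(1) show ?case
      by (intro exI[of _ "Suc j"] exI[of _ "u @ p"] exI[of _ z']) auto
  next
    case (deletes_Cons s z)
    then show ?case by (intro exI[of _ 0] exI[of _ "[]"] exI[of _ z]) auto
  qed
  with that show thesis by blast
qed

text \<open>
  The j bursts in front of the first symbol may be replaced by the f bursts in front of position
  f*b, f the lead index, together with j - f bursts right after it.
\<close>

lemma lead_tails_if_deletes_Cons:
  assumes "deletes b s z (c # w)"
  shows "c \<in> lead_symbols b s z \<and> w \<in> lead_tails b s z c"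
proof -
  from assms obtain j p z'
    where j: "j \<le> s" "z = p @ c # z'" "length p = j * b" "deletes b (s - j) z' w"
    by (rule deletes_ConsE)
  have at_j: "lead_at b s z c j"
    using j by (simp add: lead_at_def nth_append)
  define f where "f = lead_index b s z c"
  have "f \<le> j"
    unfolding f_def using at_j by (rule lead_index_le)
  then have "f * b + 1 \<le> length (p @ [c])"
    using j(3) by simp
  moreover have "z = (p @ [c]) @ z'"
    using j(2) by simp
  ultimately have drop_z: "drop (f * b + 1) z = drop (f * b + 1) (p @ [c]) @ z'"
    by (simp only: drop_append) simp
  have "length (drop (f * b + 1) (p @ [c])) = (j - f) * b"
    using j(3) by (simp add: diff_mult_distrib)
  from deletes_append[OF deletes_Nil[OF this] j(4)]
  have "deletes b ((j - f) + (s - j)) (drop (f * b + 1) z) w"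
    by (simp only: drop_z append_Nil)
  moreover have "(j - f) + (s - j) = s - f"
    using \<open>f \<le> j\<close> j(1) by simp
  ultimately have "deletes b (s - f) (drop (f * b + 1) z) w"
    by simp
  then show ?thesis
    using at_j by (auto simp: lead_symbols_def lead_tails_def f_def)
qed

lemma deletes_Cons_if_lead_tails:
  assumes "c \<in> lead_symbols b s z" and "w \<in> lead_tails b s z c"
  shows "deletes b s z (c # w)"
proof -
  define f where "f = lead_index b s z c"
  have at_f: "f \<le> s" "f * b < length z" "z ! (f * b) = c"
    using lead_at_lead_index[of c b s z] assms(1) by (auto simp: lead_at_def f_def)
  have split_z: "z = take (f * b) z @ c # drop (f * b + 1) z"
    using at_f id_take_nth_drop[of "f * b" z] by simp
  show ?thesis
    using deletes_append[OF deletes_Nil deletes_Cons, of "take (f * b) z" f b "s - f"] assms(2) at_f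
    by (subst split_z) (simp add: lead_tails_def f_def)
qed

lemma deletes_Cons_iff:
  "deletes b s z (c # w) \<longleftrightarrow> c \<in> lead_symbols b s z \<and> w \<in> lead_tails b s z c"
  by (blast intro: deletes_Cons_if_lead_tails dest: lead_tails_if_deletes_Cons)

lemma deletes_eq_UN_lead:
  assumes "s * b < length z"
  shows "{y. deletes b s z y} = (\<Union>c \<in> lead_symbols b s z. (#) c ` lead_tails b s z c)"
proof (intro set_eqI iffI)
  fix y
  assume y: "y \<in> {y. deletes b s z y}"
  have "y \<noteq> []"
  proof
    assume "y = []"
    with y deletes_length[of b s z y] assms show False by simp
  qed
  then obtain c w where cw: "y = c # w"
    by (cases y) auto
  with y have "c \<in> lead_symbols b s z" "w \<in> lead_tails b s z c"
    by (simp_all add: deletes_Cons_iff)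
  with cw show "y \<in> (\<Union>c \<in> lead_symbols b s z. (#) c ` lead_tails b s z c)"
    by blast
next
  fix y
  assume "y \<in> (\<Union>c \<in> lead_symbols b s z. (#) c ` lead_tails b s z c)"
  then obtain c w where "c \<in> lead_symbols b s z" "w \<in> lead_tails b s z c" "y = c # w"
    by blast
  then show "y \<in> {y. deletes b s z y}"
    by (simp add: deletes_Cons_iff)
qed

lemma finite_lead_tails: "finite (lead_tails b s z c)"
  unfolding lead_tails_def by (rule finite_deletes)

lemma card_deletes_eq_sum:
  assumes "s * b < length z"
  shows "card {y. deletes b s z y} = (\<Sum>c \<in> lead_symbols b s z. card (lead_tails b s z c))"
  unfolding deletes_eq_UN_lead[OF assms]
  by (rule card_UN_image_Cons) (simp_all add: finite_lead_symbols finite_lead_tails)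

lemma card_inter_deletes_eq_sum:
  assumes "s * b < length z1" and "s * b < length z2"
  shows "card ({y. deletes b s z1 y} \<inter> {y. deletes b s z2 y}) =
    (\<Sum>c \<in> lead_symbols b s z1 \<inter> lead_symbols b s z2. card (lead_tails b s z1 c \<inter> lead_tails b s z2 c))"
proof -
  have "{y. deletes b s z1 y} \<inter> {y. deletes b s z2 y} =
      (\<Union>c \<in> lead_symbols b s z1 \<inter> lead_symbols b s z2. (#) c ` (lead_tails b s z1 c \<inter> lead_tails b s z2 c))"
    unfolding deletes_eq_UN_lead[OF assms(1)] deletes_eq_UN_lead[OF assms(2)] by auto
  then show ?thesis
    by (simp add: card_UN_image_Cons finite_lead_symbols finite_lead_tails)
qed

lemma lead_at_first: "z \<noteq> [] \<Longrightarrow> lead_at b s z (z ! 0) 0"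
  by (simp add: lead_at_def)

lemma first_in_lead_symbols: "z \<noteq> [] \<Longrightarrow> z ! 0 \<in> lead_symbols b s z"
  using lead_at_first by (auto simp: lead_symbols_def)

lemma lead_tails_first: "z \<noteq> [] \<Longrightarrow> lead_tails b s z (z ! 0) = {y. deletes b s (tl z) y}"
  using lead_index_le[OF lead_at_first, of z b s] by (simp add: lead_tails_def drop_Suc)

lemma lead_at_eq_if_agree:
  assumes "length z1 = length z2" and "z1 ! 0 = z2 ! 0" and "drop b z1 = drop b z2"
  shows "lead_at b s z1 = lead_at b s z2"
proof -
  have "z1 ! (j * b) = z2 ! (j * b)" if "j * b < length z1" for j
  proof (cases j)
    case 0
    then show ?thesis using assms(2) by simp
  next
    case (Suc j')
    then have "z1 ! (j * b) = drop b z1 ! (j' * b)" and "z2 ! (j * b) = drop b z2 ! (j' * b)"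
      using that assms(1) by (simp_all add: add.commute)
    then show ?thesis using assms(3) by simp
  qed
  then show ?thesis
    using assms(1) by (auto simp: lead_at_def fun_eq_iff)
qed

lemma lead_tails_eq_if_agree:
  assumes "length z1 = length z2" and "z1 ! 0 = z2 ! 0" and "drop b z1 = drop b z2"
    and "c \<in> lead_symbols b s z1" and "c \<noteq> z1 ! 0"
  shows "lead_tails b s z2 c = lead_tails b s z1 c"
proof -
  define j where "j = lead_index b s z1 c"
  have "lead_index b s z2 = lead_index b s z1"
    using lead_at_eq_if_agree[OF assms(1-3)] by (simp add: lead_index_def fun_eq_iff)
  moreover have "j \<noteq> 0"
  proof
    assume "j = 0"
    with lead_at_lead_index[OF assms(4)] have "c = z1 ! 0"
      by (simp add: lead_at_def j_def)
    with assms(5) show False ..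
  qed
  then have "b \<le> j * b + 1"
    by (cases j) auto
  then have "drop (j * b + 1) z2 = drop (j * b + 1) z1"
    using assms(3) by (metis drop_drop le_add_diff_inverse2)
  ultimately show ?thesis
    by (simp add: lead_tails_def j_def)
qed

section \<open>The maximal size of a deletion ball\<close>

text \<open>
  The conventions for D_{q,b}(m,s) are built in; the sum runs over the lead index j of the first
  symbol.
\<close>

function Drec :: "nat \<Rightarrow> nat \<Rightarrow> int \<Rightarrow> int \<Rightarrow> nat" where
  "Drec q b m s =
     (if s < 0 \<or> m < int b * s then 0
      else if m = int b * s then 1
      else (\<Sum>j<q. Drec q b (m - int j * int b - 1) (s - int j)))"
  by pat_completeness auto
termination
proof (relation "measure (\<lambda>(q, b, m, s). nat m)")
  fix q b j :: nat and m s :: int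
  assume "\<not> (s < 0 \<or> m < int b * s)" and "m \<noteq> int b * s"
  moreover have "0 \<le> int b * s" if "0 \<le> s"
    using that by simp
  ultimately have "0 < m" by linarith
  moreover have "0 \<le> int j * int b" by simp
  then have "-1 < int j * int b" by linarith
  ultimately show "((q, b, m - int j * int b - 1, s - int j), q, b, m, s) \<in> measure (\<lambda>(q, b, m, s). nat m)"
    by simp
qed simp

declare Drec.simps [simp del]

lemma Drec_eq_0: "s < 0 \<or> m < int b * s \<Longrightarrow> Drec q b m s = 0"
  by (simp add: Drec.simps)

lemma Drec_eq_1: "0 \<le> s \<Longrightarrow> m = int b * s \<Longrightarrow> Drec q b m s = 1"
  by (simp add: Drec.simps)

lemma Drec_step:
  "0 \<le> s \<Longrightarrow> int b * s < m \<Longrightarrow> Drec q b m s = (\<Sum>j<q. Drec q b (m - int j * int b - 1) (s - int j))"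
  by (subst Drec.simps) simp

lemma Drec_step_nat:
  "s * b < m \<Longrightarrow> Drec q b (int m) (int s) = (\<Sum>j<q. Drec q b (int m - int j * int b - 1) (int s - int j))"
  by (rule Drec_step) (simp_all add: mult.commute flip: of_nat_mult)

lemma Drec_tail:
  "j \<le> s \<Longrightarrow> j * b < m \<Longrightarrow>
   Drec q b (int (m - (j * b + 1))) (int (s - j)) = Drec q b (int m - int j * int b - 1) (int s - int j)"
  by (simp add: of_nat_diff algebra_simps)

lemma Drec_le_shift: "Drec q b (m - int b) (s - 1) \<le> Drec q b m s"
proof (induction q b m s rule: Drec.induct)
  case (1 q b m s)
  consider "s - 1 < 0 \<or> m - int b < int b * (s - 1)" | "0 < s" "m - int b = int b * (s - 1)"
    | "0 < s" "int b * (s - 1) < m - int b"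
    by linarith
  then show ?case
  proof cases
    case 1
    then show ?thesis by (simp add: Drec_eq_0)
  next
    case 2
    then show ?thesis by (simp add: Drec_eq_1 algebra_simps)
  next
    case 3
    then have step: "0 \<le> s" "int b * s < m"
      and recursive: "\<not> (s < 0 \<or> m < int b * s)" "m \<noteq> int b * s"
      by (auto simp: algebra_simps)
    have "Drec q b (m - int b) (s - 1) = (\<Sum>j<q. Drec q b (m - int j * int b - 1 - int b) (s - int j - 1))"
      using 3 by (simp add: Drec_step algebra_simps)
    also have "\<dots> \<le> (\<Sum>j<q. Drec q b (m - int j * int b - 1) (s - int j))"
      by (rule sum_mono) (use "1.IH"[OF recursive] in simp)
    also have "\<dots> = Drec q b m s"
      using step by (simp add: Drec_step)
    finally show ?thesis .
  qed
qed

lemma card_deletes_short: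
  assumes "length z \<le> s * b"
  shows "card {y. deletes b s z y} = Drec q b (int (length z)) (int s)"
proof (cases "length z < s * b")
  case True
  then have "int (length z) < int b * int s"
    by (simp add: mult.commute flip: of_nat_mult)
  with True show ?thesis
    by (simp add: deletes_too_short Drec_eq_0)
next
  case False
  with assms have "length z = s * b" by simp
  then show ?thesis
    by (simp add: deletes_exact_length Drec_eq_1 mult.commute flip: of_nat_mult)
qed

text \<open>
  The window of length m at position a of the infinite b-cyclic sequence X^0. Its lead symbols
  for the indices j < q are pairwise distinct, which is why it attains Drec.
\<close>

definition cyclic_window :: "nat \<Rightarrow> nat \<Rightarrow> nat \<Rightarrow> nat \<Rightarrow> nat list" where
  "cyclic_window q b a m = map (\<lambda>i. ((a + i) div b) mod q) [0..<m]"

lemma length_cyclic_window [simp]: "length (cyclic_window q b a m) = m"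
  by (simp add: cyclic_window_def)

lemma nth_cyclic_window: "i < m \<Longrightarrow> cyclic_window q b a m ! i = ((a + i) div b) mod q"
  by (simp add: cyclic_window_def)

lemma drop_cyclic_window: "drop k (cyclic_window q b a m) = cyclic_window q b (a + k) (m - k)"
  by (rule nth_equalityI) (auto simp: nth_cyclic_window add.assoc)

lemma tl_cyclic_window: "tl (cyclic_window q b a m) = cyclic_window q b (Suc a) (m - 1)"
  using drop_cyclic_window[of 1] by (simp add: drop_Suc)

lemma cyclic_window_in_seqs: "0 < q \<Longrightarrow> cyclic_window q b a m \<in> seqs q m"
  by (auto simp: seqs_def cyclic_window_def)

lemma cyc_eq_cyclic_window: "0 < b \<Longrightarrow> cyc \<sigma> m q b = cyclic_window q b (\<sigma> * b) m"
  by (simp add: cyc_def cyclic_window_def)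

lemma replicate_append_cyclic_window:
  "replicate b 0 @ cyclic_window q b b m = cyclic_window q b 0 (b + m)"
  by (rule nth_equalityI) (auto simp: nth_append nth_cyclic_window)

lemma lead_at_cyclic_window:
  assumes "0 < b"
  shows "lead_at b s (cyclic_window q b a m) c j \<longleftrightarrow> j \<le> s \<and> j * b < m \<and> c = (a div b + j) mod q"
  using assms by (auto simp: lead_at_def nth_cyclic_window add.commute)

lemma lead_symbols_cyclic_window:
  assumes "0 < b" and "0 < q"
  shows "lead_symbols b s (cyclic_window q b a m) =
           (\<lambda>j. (a div b + j) mod q) ` {j. j < q \<and> j \<le> s \<and> j * b < m}"
proof (intro set_eqI iffI)
  fix c
  assume "c \<in> lead_symbols b s (cyclic_window q b a m)"
  then obtain j where j: "j \<le> s" "j * b < m" "c = (a div b + j) mod q"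
    using assms(1) by (auto simp: lead_symbols_def lead_at_cyclic_window)
  have "j mod q \<le> j" by simp
  then have "j mod q \<le> s" and "j mod q * b < m"
    using j(1,2) mult_le_mono1[of "j mod q" j b] by linarith+
  moreover have "c = (a div b + j mod q) mod q"
    using j(3) by (simp add: mod_add_right_eq)
  ultimately show "c \<in> (\<lambda>j. (a div b + j) mod q) ` {j. j < q \<and> j \<le> s \<and> j * b < m}"
    using assms(2) by auto
qed (use assms(1) in \<open>auto simp: lead_symbols_def lead_at_cyclic_window\<close>)

lemma lead_index_cyclic_window:
  assumes "0 < b" and "j < q" and "j \<le> s" and "j * b < m"
  shows "lead_index b s (cyclic_window q b a m) ((a div b + j) mod q) = j"
  unfolding lead_index_def
proof (rule Least_equality)
  show "lead_at b s (cyclic_window q b a m) ((a div b + j) mod q) j"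
    using assms by (simp add: lead_at_cyclic_window)
  fix i
  assume "lead_at b s (cyclic_window q b a m) ((a div b + j) mod q) i"
  then have "i \<le> s" "(a div b + j) mod q = (a div b + i) mod q"
    using assms(1) by (simp_all add: lead_at_cyclic_window)
  then show "j \<le> i"
    using mod_add_left_inj[of "a div b" j q i] assms(2) by (cases "i < q") auto
qed

lemma sum_lead_symbols_cyclic_window:
  assumes "0 < b" and "0 < q"
  shows "(\<Sum>c \<in> lead_symbols b s (cyclic_window q b a m). f c) =
         (\<Sum>j | j < q \<and> j \<le> s \<and> j * b < m. f ((a div b + j) mod q))"
proof -
  have "inj_on (\<lambda>j. (a div b + j) mod q) {j. j < q \<and> j \<le> s \<and> j * b < m}"
    by (rule inj_onI) (auto dest: mod_add_left_inj)
  then show ?thesis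
    by (simp add: lead_symbols_cyclic_window[OF assms] sum.reindex)
qed

lemma lead_tails_cyclic_window:
  assumes "0 < b" and "j < q" and "j \<le> s" and "j * b < m"
  shows "lead_tails b s (cyclic_window q b a m) ((a div b + j) mod q) =
         {w. deletes b (s - j) (cyclic_window q b (a + (j * b + 1)) (m - (j * b + 1))) w}"
  using lead_index_cyclic_window[OF assms, of a] by (simp add: lead_tails_def drop_cyclic_window)

lemma Drec_term_eq_0:
  assumes "\<not> (j \<le> s \<and> j * b < m)"
  shows "Drec q b (int m - int j * int b - 1) (int s - int j) = 0"
proof (cases "j \<le> s")
  case True
  with assms have "int m - int j * int b - 1 < 0"
    by (simp flip: of_nat_mult)
  moreover have "0 \<le> int b * (int s - int j)"
    using True by simp
  ultimately show ?thesis
    by (simp add: Drec_eq_0)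
next
  case False
  then show ?thesis by (simp add: Drec_eq_0)
qed

lemma card_deletes_cyclic_window:
  assumes "0 < b" and "0 < q"
  shows "card {y. deletes b s (cyclic_window q b a m) y} = Drec q b (int m) (int s)"
proof (induction m arbitrary: a s rule: less_induct)
  case (less m)
  show ?case
  proof (cases "m \<le> s * b")
    case True
    then show ?thesis using card_deletes_short[of "cyclic_window q b a m"] by simp
  next
    case False
    define z where "z = cyclic_window q b a m"
    define J where "J = {j. j < q \<and> j \<le> s \<and> j * b < m}"
    define G where "G j = Drec q b (int m - int j * int b - 1) (int s - int j)" for j
    have "card {y. deletes b s z y} = (\<Sum>c \<in> lead_symbols b s z. card (lead_tails b s z c))"
      using False by (simp add: card_deletes_eq_sum z_def)
    also have "\<dots> = (\<Sum>j \<in> J. card (lead_tails b s z ((a div b + j) mod q)))"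
      unfolding z_def J_def by (rule sum_lead_symbols_cyclic_window[OF assms])
    also have "\<dots> = (\<Sum>j \<in> J. G j)"
    proof (rule sum.cong)
      fix j
      assume "j \<in> J"
      then show "card (lead_tails b s z ((a div b + j) mod q)) = G j"
        using less.IH[of "m - (j * b + 1)"] Drec_tail[of j s b m q]
        by (simp add: J_def G_def z_def lead_tails_cyclic_window[OF assms(1)])
    qed simp
    also have "\<dots> = (\<Sum>j<q. G j)"
      by (rule sum.mono_neutral_left) (auto simp: J_def G_def Drec_term_eq_0)
    also have "\<dots> = Drec q b (int m) (int s)"
      using False by (simp add: Drec_step_nat G_def)
    finally show ?thesis by (simp add: z_def)
  qed
qed

lemma card_lead_index_image_le:
  assumes "set z \<subseteq> {..<q}"
  shows "card (lead_index b s z ` lead_symbols b s z) \<le> q"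
proof -
  have "card (lead_index b s z ` lead_symbols b s z) \<le> card (lead_symbols b s z)"
    by (rule card_image_le[OF finite_lead_symbols])
  also have "\<dots> \<le> card {..<q}"
    using subset_trans[OF lead_symbols_subset assms] by (rule card_mono[rotated]) simp
  finally show ?thesis by simp
qed

lemma card_deletes_le_Drec:
  assumes "set z \<subseteq> {..<q}"
  shows "card {y. deletes b s z y} \<le> Drec q b (int (length z)) (int s)"
  using assms
proof (induction "length z" arbitrary: z s rule: less_induct)
  case less
  show ?case
  proof (cases "length z \<le> s * b")
    case True
    then show ?thesis using card_deletes_short[OF True, of q] by simp
  next
    case False
    define m where "m = length z"
    define L where "L = lead_symbols b s z"
    define G where "G j = Drec q b (int m - int j * int b - 1) (int s - int j)" for j
    have tails: "card (lead_tails b s z c) \<le> G (lead_index b s z c)" if "c \<in> L" for c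
    proof -
      define j where "j = lead_index b s z c"
      have "j \<le> s" "j * b < m"
        using lead_at_lead_index[of c b s z] that by (simp_all add: lead_at_def j_def L_def m_def)
      moreover have "set (drop (j * b + 1) z) \<subseteq> {..<q}"
        by (rule subset_trans[OF set_drop_subset less.prems])
      ultimately show ?thesis
        using less.hyps[of "drop (j * b + 1) z" "s - j"] Drec_tail[of j s b m q]
        by (simp add: lead_tails_def G_def m_def j_def)
    qed
    have "card {y. deletes b s z y} = (\<Sum>c \<in> L. card (lead_tails b s z c))"
      using False by (simp add: card_deletes_eq_sum L_def)
    also have "\<dots> \<le> (\<Sum>c \<in> L. G (lead_index b s z c))"
      by (rule sum_mono) (rule tails)
    also have "\<dots> = (\<Sum>j \<in> lead_index b s z ` L. G j)"
      unfolding L_def by (simp add: sum.reindex[OF inj_on_lead_index])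
    also have "\<dots> \<le> (\<Sum>j<q. G j)"
    proof (rule sum_le_sum_lessThan_antimono)
      show "G (Suc j) \<le> G j" for j
        using Drec_le_shift[of q b "int m - int j * int b - 1" "int s - int j"]
        by (simp add: G_def algebra_simps)
      show "finite (lead_index b s z ` L)"
        by (simp add: L_def finite_lead_symbols)
      show "card (lead_index b s z ` L) \<le> q"
        unfolding L_def using less.prems by (rule card_lead_index_image_le)
    qed
    also have "\<dots> = Drec q b (int (length z)) (int s)"
      using False by (simp add: Drec_step_nat G_def m_def)
    finally show ?thesis .
  qed
qed

lemma finite_seqs: "finite (seqs q n)"
  unfolding seqs_def using finite_lists_length_eq[of "{..<q}" n] by (simp add: conj_commute)

lemma Dmax_eq_Drec:
  assumes "0 < q" and "0 < b"
  shows "Dmax q b m s = Drec q b m s"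
proof (cases "s < 0 \<or> m \<le> int b * s")
  case True
  then show ?thesis
    by (auto simp: Dmax_def Drec_eq_0 Drec_eq_1)
next
  case False
  moreover have "0 \<le> int b * s"
    using False by simp
  ultimately have s: "int (nat s) = s" and m: "int (nat m) = m"
    by linarith+
  have "Max ((\<lambda>z. card (Dset (nat s) b z)) ` seqs q (nat m)) = Drec q b m s"
  proof (rule Max_eqI)
    show "finite ((\<lambda>z. card (Dset (nat s) b z)) ` seqs q (nat m))"
      by (simp add: finite_seqs)
    show "k \<le> Drec q b m s" if "k \<in> (\<lambda>z. card (Dset (nat s) b z)) ` seqs q (nat m)" for k
    proof -
      from that obtain z where "z \<in> seqs q (nat m)" "k = card (Dset (nat s) b z)"
        by blast
      then show ?thesis
        using card_deletes_le_Drec[of z q b "nat s"] s m by (simp add: seqs_def Dset_eq_deletes)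
    qed
    show "Drec q b m s \<in> (\<lambda>z. card (Dset (nat s) b z)) ` seqs q (nat m)"
      using card_deletes_cyclic_window[OF assms(2,1), of "nat s" 0 "nat m"] s m
        cyclic_window_in_seqs[OF assms(1), of b 0 "nat m"]
      by (force simp: Dset_eq_deletes)
  qed
  moreover have "{card (Dset (nat s) b z) | z. z \<in> seqs q (nat m)} =
      (\<lambda>z. card (Dset (nat s) b z)) ` seqs q (nat m)"
    by auto
  ultimately show ?thesis
    using False by (simp add: Dmax_def)
qed

section \<open>Words that differ at a single position\<close>

text \<open>
  Positions 1, ..., b-1 are no lead positions, so every lead symbol other than z!0 has the same
  lead index and the same tails in z1 and z2.
\<close>

lemma card_inter_deletes_tl:
  assumes "s * b < length z1" and "length z1 = length z2"
    and "z1 ! 0 = z2 ! 0" and "drop b z1 = drop b z2"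
  shows "int (card ({y. deletes b s z1 y} \<inter> {y. deletes b s z2 y})) =
         int (card {y. deletes b s z1 y}) - int (card {y. deletes b s (tl z1) y})
         + int (card ({y. deletes b s (tl z1) y} \<inter> {y. deletes b s (tl z2) y}))"
proof -
  have "z1 \<noteq> []" "z2 \<noteq> []"
    using assms(1,2) by auto
  define c0 where "c0 = z1 ! 0"
  define L where "L = lead_symbols b s z1"
  have "c0 \<in> L"
    using first_in_lead_symbols[OF \<open>z1 \<noteq> []\<close>] by (simp add: c0_def L_def)
  have "lead_symbols b s z2 = L"
    using lead_at_eq_if_agree[OF assms(2-4)] by (simp add: lead_symbols_def L_def)
  have tails0: "lead_tails b s z1 c0 = {y. deletes b s (tl z1) y}"
    "lead_tails b s z2 c0 = {y. deletes b s (tl z2) y}"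
    using lead_tails_first[OF \<open>z1 \<noteq> []\<close>] lead_tails_first[OF \<open>z2 \<noteq> []\<close>] assms(3)
    by (simp_all add: c0_def)
  define rest where "rest = (\<Sum>c \<in> L - {c0}. card (lead_tails b s z1 c))"
  have "card ({y. deletes b s z1 y} \<inter> {y. deletes b s z2 y}) =
      (\<Sum>c \<in> L. card (lead_tails b s z1 c \<inter> lead_tails b s z2 c))"
    using assms(1,2) \<open>lead_symbols b s z2 = L\<close> by (simp add: card_inter_deletes_eq_sum L_def)
  also have "\<dots> = card ({y. deletes b s (tl z1) y} \<inter> {y. deletes b s (tl z2) y}) + rest"
    using \<open>c0 \<in> L\<close> lead_tails_eq_if_agree[OF assms(2-4), of _ s, folded c0_def L_def]
    by (simp add: sum.remove[OF finite_lead_symbols] tails0 rest_def L_def)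
  finally have "card ({y. deletes b s z1 y} \<inter> {y. deletes b s z2 y}) =
      card ({y. deletes b s (tl z1) y} \<inter> {y. deletes b s (tl z2) y}) + rest" .
  moreover have "card {y. deletes b s z1 y} = card {y. deletes b s (tl z1) y} + rest"
    using assms(1) \<open>c0 \<in> L\<close>
    by (simp add: card_deletes_eq_sum sum.remove[OF finite_lead_symbols] tails0 rest_def L_def)
  ultimately show ?thesis by simp
qed

lemma deletes_inter_Cons_neq:
  assumes "a \<noteq> a'" and "0 < b" and "0 < s" and "b \<le> Suc (length z)"
  shows "{y. deletes b s (a # z) y} \<inter> {y. deletes b s (a' # z) y} = {y. deletes b (s - 1) (drop (b - 1) z) y}"
proof -
  have drop_eq: "drop b (a # z) = drop (b - 1) z" "drop b (a' # z) = drop (b - 1) z"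
    using assms(2) by (simp_all add: drop_Cons')
  show ?thesis
  proof (intro set_eqI iffI)
    fix y
    assume "y \<in> {y. deletes b s (a # z) y} \<inter> {y. deletes b s (a' # z) y}"
    then show "y \<in> {y. deletes b (s - 1) (drop (b - 1) z) y}"
      using deletes_ConsD[of b s a z y] deletes_ConsD[of b s a' z y] assms(1) drop_eq by auto
  next
    fix y
    assume "y \<in> {y. deletes b (s - 1) (drop (b - 1) z) y}"
    then show "y \<in> {y. deletes b s (a # z) y} \<inter> {y. deletes b s (a' # z) y}"
      using deletes_burst_front[of b "a # z" "s - 1" y] deletes_burst_front[of b "a' # z" "s - 1" y]
        assms(3,4) drop_eq by simp
  qed
qed

lemma card_inter_deletes_cyclic_window_update_first:
  assumes "0 < b" and "0 < q" and "0 < t" and "b \<le> m"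
  shows "card ({y. deletes b t (cyclic_window q b (b - 1) m) y} \<inter>
               {y. deletes b t ((cyclic_window q b (b - 1) m)[0 := 1]) y}) =
         Drec q b (int m - int b) (int t - 1)"
proof -
  define w where "w = cyclic_window q b (b - 1) m"
  have "w \<noteq> []"
    using assms(1,4) by (auto simp: w_def simp flip: length_greater_0_conv)
  moreover have "w ! 0 = 0"
    using assms(1,4) by (simp add: w_def nth_cyclic_window)
  ultimately have "w = 0 # tl w"
    by (cases w) auto
  have "{y. deletes b t w y} \<inter> {y. deletes b t (w[0 := 1]) y} =
      {y. deletes b (t - 1) (drop (b - 1) (tl w)) y}"
    using deletes_inter_Cons_neq[of 0 1 b t "tl w"] assms
    by (subst (1 2) \<open>w = 0 # tl w\<close>) (simp add: w_def)
  also have "drop (b - 1) (tl w) = cyclic_window q b (b + (b - 1)) (m - b)"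
    using assms(1) by (simp add: w_def tl_cyclic_window drop_cyclic_window)
  finally show ?thesis
    using card_deletes_cyclic_window[OF assms(1,2), of "t - 1" "b + (b - 1)" "m - b"] assms(3,4)
    by (simp add: w_def of_nat_diff)
qed

text \<open>
  The windows are the suffixes of length n-b+r of X^0_{n,q,b}, modified at their position r-1,
  i.e. at position b-1 of X^0; each induction step peels off one first symbol.
\<close>

lemma card_inter_deletes_cyclic_window_update:
  assumes "0 < b" and "0 < q" and "0 < t" and n: "(t + 1) * b \<le> n + 1"
    and "1 \<le> r" and "r \<le> b"
  shows "int (card ({y. deletes b t (cyclic_window q b (b - r) (n - b + r)) y} \<inter>
                    {y. deletes b t ((cyclic_window q b (b - r) (n - b + r))[r - 1 := 1]) y})) =
         int (Drec q b (int (n - b + r)) (int t)) - int (Drec q b (int (n - b + 1)) (int t))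
         + int (Drec q b (int (n - b + 1) - int b) (int t - 1))"
  using \<open>1 \<le> r\<close>
proof (induction r rule: dec_induct)
  case base
  have "2 * b \<le> (t + 1) * b"
    using \<open>0 < t\<close> by (intro mult_le_mono1) simp
  then have "b \<le> n - b + 1"
    using n by linarith
  then show ?case
    using card_inter_deletes_cyclic_window_update_first[OF assms(1-3)] by simp
next
  case (step k)
  define z1 where "z1 = cyclic_window q b (b - Suc k) (n - b + Suc k)"
  define z2 where "z2 = z1[k := 1]"
  have "Suc k \<le> b"
    using step.hyps \<open>r \<le> b\<close> by simp
  have "t * b < n - b + Suc k"
    using n step.hyps by (simp add: algebra_simps)
  have tl_z1: "tl z1 = cyclic_window q b (b - k) (n - b + k)"
    using \<open>Suc k \<le> b\<close> by (simp add: z1_def tl_cyclic_window Suc_diff_Suc)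
  have tl_z2: "tl z2 = (tl z1)[k - 1 := 1]"
    using step.hyps by (simp add: z2_def tl_list_update)
  have "int (card ({y. deletes b t z1 y} \<inter> {y. deletes b t z2 y})) =
      int (card {y. deletes b t z1 y}) - int (card {y. deletes b t (tl z1) y})
      + int (card ({y. deletes b t (tl z1) y} \<inter> {y. deletes b t (tl z2) y}))"
    using step.hyps \<open>Suc k \<le> b\<close> \<open>t * b < n - b + Suc k\<close>
    by (intro card_inter_deletes_tl) (simp_all add: z1_def z2_def)
  moreover have "card {y. deletes b t z1 y} = Drec q b (int (n - b + Suc k)) (int t)"
    and "card {y. deletes b t (tl z1) y} = Drec q b (int (n - b + k)) (int t)"
    using \<open>0 < b\<close> \<open>0 < q\<close> unfolding tl_z1 by (simp_all add: z1_def card_deletes_cyclic_window)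
  ultimately have "int (card ({y. deletes b t z1 y} \<inter> {y. deletes b t z2 y})) =
      int (Drec q b (int (n - b + Suc k)) (int t)) - int (Drec q b (int (n - b + 1)) (int t))
      + int (Drec q b (int (n - b + 1) - int b) (int t - 1))"
    using step.IH unfolding tl_z1 tl_z2 by linarith
  then show ?case
    by (simp add: z1_def z2_def)
qed

lemma Drec_telescope:
  assumes "0 < t" and "int b * t \<le> M"
  shows "int (Drec q b M t) - int (Drec q b (M - int b) (t - 1)) =
         int (Drec q b (M - 1) t) - int (Drec q b (M - 1 - int q * int b) (t - int q))"
proof (cases "M = int b * t")
  case True
  with assms show ?thesis
    by (simp add: Drec_eq_0 Drec_eq_1 algebra_simps)
next
  case False
  with assms have step: "int b * t < M" "int b * (t - 1) < M - int b"
    by (simp_all add: algebra_simps)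
  define f where "f j = int (Drec q b (M - int j * int b - 1) (t - int j))" for j :: nat
  have "int (Drec q b M t) = (\<Sum>j<q. f j)"
    using assms(1) step(1) by (simp add: Drec_step f_def)
  moreover have "int (Drec q b (M - int b) (t - 1)) = (\<Sum>j<q. f (Suc j))"
    using assms(1) step(2) by (simp add: Drec_step f_def algebra_simps)
  moreover have "(\<Sum>j<q. f j) - (\<Sum>j<q. f (Suc j)) = f 0 - f q"
    by (simp only: sum_subtractf [symmetric] sum_lessThan_telescope')
  ultimately show ?thesis
    by (simp add: f_def algebra_simps)
qed

lemma card_inter_Dset_cyclic_window_update:
  assumes "0 < b" and "0 < q" and "0 < t" and n: "(t + 1) * b \<le> n + 1"
  defines "w \<equiv> cyclic_window q b 0 n"
  shows "int (card (Dset t b w \<inter> Dset t b (w[b - 1 := 1]))) =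
           int (Drec q b (int n) (int t)) - int (Drec q b (int n - int b) (int t))
           + int (Drec q b (int n - int (q + 1) * int b) (int t - int q))"
proof -
  have "b \<le> n"
    using n mult_le_mono1[of 2 "t + 1" b] assms(3) by linarith
  then have "int (card (Dset t b w \<inter> Dset t b (w[b - 1 := 1]))) =
      int (Drec q b (int n) (int t)) - int (Drec q b (int n - int b + 1) (int t))
      + int (Drec q b (int n - int b + 1 - int b) (int t - 1))"
    using card_inter_deletes_cyclic_window_update[OF assms(1-3) n, of b] \<open>0 < b\<close>
    by (simp add: w_def Dset_eq_deletes of_nat_diff algebra_simps)
  also have "\<dots> = int (Drec q b (int n) (int t)) - int (Drec q b (int n - int b) (int t))
      + int (Drec q b (int n - int (q + 1) * int b) (int t - int q))"
    using Drec_telescope[of "int t" b "int n - int b + 1" q] \<open>0 < t\<close> n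
    by (simp add: algebra_simps flip: of_nat_mult)
  finally show ?thesis .
qed

lemma card_inter_Dset_le_Nminus:
  assumes "u \<in> seqs q n" and "v \<in> seqs q n" and "u \<noteq> v"
  shows "card (Dset t b u \<inter> Dset t b v) \<le> Nminus q b n t"
proof -
  have "{card (Dset t b u \<inter> Dset t b v) | u v. u \<in> seqs q n \<and> v \<in> seqs q n \<and> u \<noteq> v} \<subseteq>
      (\<lambda>(u, v). card (Dset t b u \<inter> Dset t b v)) ` (seqs q n \<times> seqs q n)"
    by auto
  then have "finite {card (Dset t b u \<inter> Dset t b v) | u v. u \<in> seqs q n \<and> v \<in> seqs q n \<and> u \<noteq> v}"
    by (rule finite_subset) (simp add: finite_seqs)
  with assms show ?thesis
    unfolding Nminus_def by (intro Max_ge) auto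
qed

theorem lemma4p13:
  fixes q b t n :: nat
  assumes "q \<ge> 2" and "b \<ge> 2" and "t \<ge> 1" and "n \<ge> (t + 1) * b - 1"
  defines "x \<equiv> replicate b 0 @ cyc 1 (n - b) q b"
      and "y \<equiv> replicate (b - 1) 0 @ [1] @ cyc 1 (n - b) q b"
  shows "int (card (Dset t b x \<inter> Dset t b y)) =
           int (Dmax q b (int n) (int t)) - int (Dmax q b (int n - int b) (int t))
           + int (Dmax q b (int n - int (q + 1) * int b) (int t - int q))
       \<and> int (Nminus q b n t) \<ge>
           int (Dmax q b (int n) (int t)) - int (Dmax q b (int n - int b) (int t))
           + int (Dmax q b (int n - int (q + 1) * int b) (int t - int q))"
proof -
  have "0 < b" "0 < q" "1 < q" "0 < t" and n: "(t + 1) * b \<le> n + 1"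
    using assms(1-4) by auto
  then have "b \<le> n"
    using mult_le_mono1[of 2 "t + 1" b] by linarith
  with \<open>0 < b\<close> have x: "x = cyclic_window q b 0 n"
    by (simp add: x_def cyc_eq_cyclic_window replicate_append_cyclic_window)
  have y: "y = x[b - 1 := 1]"
    using replicate_append_update_last[OF \<open>0 < b\<close>, of 0 "cyc 1 (n - b) q b" 1]
    by (simp add: x_def y_def)
  have "x \<in> seqs q n" "y \<in> seqs q n"
    using cyclic_window_in_seqs[of q b 0 n] set_update_subset_insert[of x "b - 1" 1] \<open>1 < q\<close>
    by (auto simp: x y seqs_def)
  moreover have "x \<noteq> y"
  proof
    assume "x = y"
    then have "x ! (b - 1) = y ! (b - 1)" by simp
    with \<open>0 < b\<close> \<open>b \<le> n\<close> show False
      by (simp add: x y nth_cyclic_window)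
  qed
  ultimately have "card (Dset t b x \<inter> Dset t b y) \<le> Nminus q b n t"
    by (rule card_inter_Dset_le_Nminus)
  with card_inter_Dset_cyclic_window_update[OF \<open>0 < b\<close> \<open>0 < q\<close> \<open>0 < t\<close> n] show ?thesis
    using \<open>0 < b\<close> \<open>0 < q\<close> by (simp add: x y Dmax_eq_Drec)
qed

end
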